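(* Let $G$ be a group, $N\trianglelefteq G$ a normal subgroup and $\mathcal{H}$ a family of proper subgroups of $G$. If $\mathcal{H}$ is strongly divided by $N$, then there is a homotopy equivalence $$\operatorname{CC}(G,\mathcal{H})\simeq \operatorname{CC}(G/N,\overline{\mathcal{H}})\ast\operatorname{CC}(N,\mathcal{H}\cap N).$$
   Context: For a group $G$ and a family $\mathcal{K}$ of subgroups, the coset complex $\operatorname{CC}(G,\mathcal{K})$ is the simplicial complex whose vertices are the cosets $gK$ ($g\in G$, $K\in\mathcal{K}$; cosets of different members of $\mathcal{K}$ are different vertices) and where a finite set of vertices spans a simplex iff the cosets have nonempty common intersection; homotopy equivalences and joins ($\ast$) refer to geometric realisations. Write $\mathcal{H}=\mathcal{H}_N\sqcup\mathcal{H}^N$ with $\mathcal{H}_N=\{H\in\mathcal{H}: HN\neq G\}$ and $\mathcal{H}^N=\{K\in\mathcal{H}: KN=G\}$. For $H\le G$ let $\overline{H}$ be its image in $G/N$. Set $\overline{\mathcal{H}}=\{\overline{H}: H\in\mathcal{H}_N\}$ and $\mathcal{H}\cap N=\{K\cap N: K\in\mathcal{H}^N\}$. $\mathcal{H}$ is strongly divided by $N$ if (1) $N\subseteq H$ for all $H\in\mathcal{H}_N$, and (2) $(K_1\cap\dots\cap K_m)N=G$ for all finite collections $K_1,\dots,K_m\in\mathcal{H}^N$. *)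

theory Defs
  imports "HOL-Analysis.Analysis" "HOL-Algebra.Algebra"
begin

text \<open>An (abstract) simplicial complex is represented by its set of simplices:
  finite nonempty sets of vertices.\<close>

text \<open>Closed geometric simplex spanned by a finite vertex set, as a set of
  barycentric-coordinate functions.\<close>
definition geom_simplex :: "'v set \<Rightarrow> ('v \<Rightarrow> real) set" where
  "geom_simplex \<sigma> = {f. (\<forall>v. f v \<ge> 0) \<and> (\<forall>v. v \<notin> \<sigma> \<longrightarrow> f v = 0) \<and> sum f \<sigma> = 1}"

definition realization :: "'v set set \<Rightarrow> ('v \<Rightarrow> real) topology" where
  "realization K = topology (\<lambda>U. U \<subseteq> (\<Union>\<sigma>\<in>K. geom_simplex \<sigma>) \<and>
      (\<forall>\<sigma>\<in>K. openin (subtopology (powertop_real UNIV) (geom_simplex \<sigma>)) (U \<inter> geom_simplex \<sigma>)))"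

definition simplicial_join :: "'v set set \<Rightarrow> 'w set set \<Rightarrow> ('v + 'w) set set" where
  "simplicial_join K L =
     {Inl ` \<sigma> \<union> Inr ` \<tau> | \<sigma> \<tau>. \<sigma> \<in> insert {} K \<and> \<tau> \<in> insert {} L} - {{}}"

text \<open>Vertices are pairs (K, gK): cosets of different members of the family are
  different vertices. A finite nonempty set of vertices is a simplex iff the cosets
  have nonempty common intersection.\<close>
definition coset_complex :: "('a, 'b) monoid_scheme \<Rightarrow> 'a set set \<Rightarrow> ('a set \<times> 'a set) set set" where
  "coset_complex G \<H> =
     {\<sigma>. finite \<sigma> \<and> \<sigma> \<noteq> {} \<and>
          \<sigma> \<subseteq> {(K, g <#\<^bsub>G\<^esub> K) | g K. g \<in> carrier G \<and> K \<in> \<H>} \<and>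
          \<Inter> (snd ` \<sigma>) \<noteq> {}}"

definition lower_fam :: "('a, 'b) monoid_scheme \<Rightarrow> 'a set set \<Rightarrow> 'a set \<Rightarrow> 'a set set" where
  "lower_fam G \<H> N = {H \<in> \<H>. H <#>\<^bsub>G\<^esub> N \<noteq> carrier G}"

definition upper_fam :: "('a, 'b) monoid_scheme \<Rightarrow> 'a set set \<Rightarrow> 'a set \<Rightarrow> 'a set set" where
  "upper_fam G \<H> N = {K \<in> \<H>. K <#>\<^bsub>G\<^esub> N = carrier G}"

text \<open>Image of a subgroup H in G/N (elements of G Mod N are the cosets N h).\<close>
definition quot_image :: "('a, 'b) monoid_scheme \<Rightarrow> 'a set \<Rightarrow> 'a set \<Rightarrow> 'a set set" where
  "quot_image G N H = (\<lambda>h. N #>\<^bsub>G\<^esub> h) ` H"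

definition quot_fam :: "('a, 'b) monoid_scheme \<Rightarrow> 'a set set \<Rightarrow> 'a set \<Rightarrow> 'a set set set" where
  "quot_fam G \<H> N = quot_image G N ` lower_fam G \<H> N"

definition inter_fam :: "('a, 'b) monoid_scheme \<Rightarrow> 'a set set \<Rightarrow> 'a set \<Rightarrow> 'a set set" where
  "inter_fam G \<H> N = (\<lambda>K. K \<inter> N) ` upper_fam G \<H> N"

definition strongly_divided :: "('a, 'b) monoid_scheme \<Rightarrow> 'a set set \<Rightarrow> 'a set \<Rightarrow> bool" where
  "strongly_divided G \<H> N \<longleftrightarrow>
     (\<forall>H \<in> lower_fam G \<H> N. N \<subseteq> H) \<and>
     (\<forall>F. finite F \<and> F \<noteq> {} \<and> F \<subseteq> upper_fam G \<H> N \<longrightarrow> (\<Inter>F) <#>\<^bsub>G\<^esub> N = carrier G)"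

end

theory Submission
  imports Defs
begin

text \<open>When \<open>\<H>\<close> is strongly divided by \<open>N\<close>, the coset complex is isomorphic to the join, so the
  realisations are even homeomorphic. The vertex map sends a coset \<open>gH\<close> with \<open>HN \<noteq> G\<close> (hence
  \<open>N \<subseteq> H\<close>) to its image in \<open>G/N\<close>, and a coset \<open>gK\<close> with \<open>KN = G\<close> to the coset \<open>gK \<inter> N\<close> of
  \<open>K \<inter> N\<close> in \<open>N\<close>. Cosets of the first kind are unions of \<open>N\<close>-cosets, so they meet iff their images
  meet. Cosets \<open>g\<^sub>iK\<^sub>i\<close> of the second kind meet iff they meet inside \<open>N\<close>, since
  \<open>(K\<^sub>1 \<inter> \<dots> \<inter> K\<^sub>m) N = G\<close>; the same identity gives \<open>k \<in> K\<^sub>1 \<inter> \<dots> \<inter> K\<^sub>m\<close> with \<open>y\<^sup>-\<^sup>1mk \<in> N\<close>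
  for a common point \<open>y\<close> of the first-kind cosets and a common point \<open>m \<in> N\<close> of the second-kind
  ones, and then \<open>mk = y(y\<^sup>-\<^sup>1mk)\<close> lies in all of them.\<close>

section \<open>Geometric realisation\<close>

lemma istopology_realization:
  "istopology (\<lambda>U. U \<subseteq> (\<Union>\<sigma>\<in>K. geom_simplex \<sigma>) \<and>
     (\<forall>\<sigma>\<in>K. openin (subtopology (powertop_real UNIV) (geom_simplex \<sigma>)) (U \<inter> geom_simplex \<sigma>)))"
    (is "istopology (\<lambda>U. U \<subseteq> _ \<and> (\<forall>\<sigma>\<in>K. openin (?top \<sigma>) (U \<inter> geom_simplex \<sigma>)))")
  unfolding istopology_def
proof (rule conjI; intro allI impI)
  fix S T
  assume "S \<subseteq> (\<Union>\<sigma>\<in>K. geom_simplex \<sigma>) \<and> (\<forall>\<sigma>\<in>K. openin (?top \<sigma>) (S \<inter> geom_simplex \<sigma>))"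
    and "T \<subseteq> (\<Union>\<sigma>\<in>K. geom_simplex \<sigma>) \<and> (\<forall>\<sigma>\<in>K. openin (?top \<sigma>) (T \<inter> geom_simplex \<sigma>))"
  then have "S \<subseteq> (\<Union>\<sigma>\<in>K. geom_simplex \<sigma>)"
    and "\<forall>\<sigma>\<in>K. openin (?top \<sigma>) ((S \<inter> geom_simplex \<sigma>) \<inter> (T \<inter> geom_simplex \<sigma>))"
    by (simp_all add: openin_Int)
  moreover have "(S \<inter> C) \<inter> (T \<inter> C) = S \<inter> T \<inter> C" for C
    by blast
  ultimately show "S \<inter> T \<subseteq> (\<Union>\<sigma>\<in>K. geom_simplex \<sigma>) \<and> (\<forall>\<sigma>\<in>K. openin (?top \<sigma>) (S \<inter> T \<inter> geom_simplex \<sigma>))"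
    by auto
next
  fix \<A>
  assume \<A>: "\<forall>U\<in>\<A>. U \<subseteq> (\<Union>\<sigma>\<in>K. geom_simplex \<sigma>) \<and> (\<forall>\<sigma>\<in>K. openin (?top \<sigma>) (U \<inter> geom_simplex \<sigma>))"
  have eq: "\<Union>\<A> \<inter> C = (\<Union>U\<in>\<A>. U \<inter> C)" for C
    by blast
  have "openin (?top \<sigma>) (\<Union>\<A> \<inter> geom_simplex \<sigma>)" if "\<sigma> \<in> K" for \<sigma>
    unfolding eq using \<A> that by (intro openin_Union) auto
  then show "\<Union>\<A> \<subseteq> (\<Union>\<sigma>\<in>K. geom_simplex \<sigma>) \<and> (\<forall>\<sigma>\<in>K. openin (?top \<sigma>) (\<Union>\<A> \<inter> geom_simplex \<sigma>))"
    using \<A> by blast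
qed

lemma openin_realization:
  "openin (realization K) U \<longleftrightarrow> U \<subseteq> (\<Union>\<sigma>\<in>K. geom_simplex \<sigma>) \<and>
     (\<forall>\<sigma>\<in>K. openin (subtopology (powertop_real UNIV) (geom_simplex \<sigma>)) (U \<inter> geom_simplex \<sigma>))"
  unfolding realization_def by (simp add: istopology_realization)

lemma topspace_realization: "topspace (realization K) = (\<Union>\<sigma>\<in>K. geom_simplex \<sigma>)"
proof (rule antisym)
  show "topspace (realization K) \<subseteq> (\<Union>\<sigma>\<in>K. geom_simplex \<sigma>)"
    using openin_realization[of K "topspace (realization K)"] by simp
  have "(\<Union>\<sigma>\<in>K. geom_simplex \<sigma>) \<inter> geom_simplex \<sigma> = geom_simplex \<sigma>" if "\<sigma> \<in> K" for \<sigma>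
    using that by blast
  then have "openin (realization K) (\<Union>\<sigma>\<in>K. geom_simplex \<sigma>)"
    by (simp add: openin_realization openin_subtopology_refl)
  then show "(\<Union>\<sigma>\<in>K. geom_simplex \<sigma>) \<subseteq> topspace (realization K)"
    by (rule openin_subset)
qed

lemma continuous_map_realization:
  assumes F: "continuous_map (powertop_real UNIV) (powertop_real UNIV) F"
    and simplicial: "\<And>\<sigma>. \<sigma> \<in> K \<Longrightarrow> \<exists>\<tau>\<in>L. F ` geom_simplex \<sigma> \<subseteq> geom_simplex \<tau>"
  shows "continuous_map (realization K) (realization L) F"
  unfolding continuous_map_def
proof (intro conjI allI impI)
  show "F \<in> topspace (realization K) \<rightarrow> topspace (realization L)"
    using simplicial by (fastforce simp: topspace_realization)
  fix U assume U: "openin (realization L) U"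
  show "openin (realization K) {x \<in> topspace (realization K). F x \<in> U}"
  proof (subst openin_realization, intro conjI ballI)
    show "{x \<in> topspace (realization K). F x \<in> U} \<subseteq> (\<Union>\<sigma>\<in>K. geom_simplex \<sigma>)"
      by (auto simp: topspace_realization)
    fix \<sigma> assume "\<sigma> \<in> K"
    then obtain \<tau> where \<tau>: "\<tau> \<in> L" "F ` geom_simplex \<sigma> \<subseteq> geom_simplex \<tau>"
      using simplicial by blast
    have "continuous_map (subtopology (powertop_real UNIV) (geom_simplex \<sigma>))
            (subtopology (powertop_real UNIV) (geom_simplex \<tau>)) F"
      using F \<tau>(2) by (simp add: continuous_map_in_subtopology continuous_map_from_subtopology image_subset_iff)
    moreover have "openin (subtopology (powertop_real UNIV) (geom_simplex \<tau>)) (U \<inter> geom_simplex \<tau>)"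
      using U \<tau>(1) by (simp add: openin_realization)
    ultimately have "openin (subtopology (powertop_real UNIV) (geom_simplex \<sigma>))
        {x \<in> topspace (subtopology (powertop_real UNIV) (geom_simplex \<sigma>)). F x \<in> U \<inter> geom_simplex \<tau>}"
      by (rule openin_continuous_map_preimage)
    moreover have "{x \<in> topspace (subtopology (powertop_real UNIV) (geom_simplex \<sigma>)). F x \<in> U \<inter> geom_simplex \<tau>}
        = {x \<in> topspace (realization K). F x \<in> U} \<inter> geom_simplex \<sigma>"
      using \<tau>(2) \<open>\<sigma> \<in> K\<close> by (auto simp: topspace_realization)
    ultimately show "openin (subtopology (powertop_real UNIV) (geom_simplex \<sigma>))
        ({x \<in> topspace (realization K). F x \<in> U} \<inter> geom_simplex \<sigma>)"
      by simp
  qed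
qed

lemma continuous_map_powertop_reindex:
  "continuous_map (powertop_real UNIV) (powertop_real UNIV) (\<lambda>f w. if P w then f (h w) else 0)"
  by (auto simp: continuous_map_componentwise_UNIV intro: continuous_map_product_projection)

lemma geom_simplex_reindex:
  assumes "inj_on \<phi> V" "\<sigma> \<subseteq> V"
  shows "(\<lambda>g v. if v \<in> V then g (\<phi> v) else 0) ` geom_simplex (\<phi> ` \<sigma>) \<subseteq> geom_simplex \<sigma>"
proof
  fix f assume "f \<in> (\<lambda>g v. if v \<in> V then g (\<phi> v) else 0) ` geom_simplex (\<phi> ` \<sigma>)"
  then obtain g where g: "g \<in> geom_simplex (\<phi> ` \<sigma>)" and f: "f = (\<lambda>v. if v \<in> V then g (\<phi> v) else 0)"
    by blast
  have "f v = 0" if "v \<notin> \<sigma>" for v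
    using that g assms inj_on_image_mem_iff[of \<phi> V v \<sigma>] by (auto simp: f geom_simplex_def)
  moreover have "sum f \<sigma> = sum g (\<phi> ` \<sigma>)"
    using assms by (simp add: f sum.reindex inj_on_subset subset_iff)
  ultimately show "f \<in> geom_simplex \<sigma>"
    using g by (auto simp: f geom_simplex_def)
qed

lemma homeomorphic_space_realization_image:
  fixes \<phi> :: "'v \<Rightarrow> 'w"
  assumes "inj_on \<phi> (\<Union>K)"
  shows "realization K homeomorphic_space realization ((`) \<phi> ` K)"
proof -
  define V where "V = \<Union>K"
  define \<psi> where "\<psi> = inv_into V \<phi>"
  define F :: "('v \<Rightarrow> real) \<Rightarrow> 'w \<Rightarrow> real" where "F f w = (if w \<in> \<phi> ` V then f (\<psi> w) else 0)" for f w
  define G :: "('w \<Rightarrow> real) \<Rightarrow> 'v \<Rightarrow> real" where "G g v = (if v \<in> V then g (\<phi> v) else 0)" for g v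
  have inj: "inj_on \<phi> V" "inj_on \<psi> (\<phi> ` V)"
    using assms by (simp_all add: V_def \<psi>_def inj_on_inv_into)
  have \<psi>\<phi>: "\<psi> (\<phi> v) = v" if "v \<in> V" for v
    using inj that by (simp add: \<psi>_def)
  have sV: "\<sigma> \<subseteq> V" if "\<sigma> \<in> K" for \<sigma>
    using that by (auto simp: V_def)
  have "continuous_map (realization K) (realization ((`) \<phi> ` K)) F"
  proof (rule continuous_map_realization)
    show "continuous_map (powertop_real UNIV) (powertop_real UNIV) F"
      unfolding F_def[abs_def] by (rule continuous_map_powertop_reindex)
    fix \<sigma> assume "\<sigma> \<in> K"
    then have "\<psi> ` \<phi> ` \<sigma> = \<sigma>" "\<phi> ` \<sigma> \<subseteq> \<phi> ` V"
      using \<psi>\<phi> sV by (force simp: image_image)+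
    then have "F ` geom_simplex \<sigma> \<subseteq> geom_simplex (\<phi> ` \<sigma>)"
      using geom_simplex_reindex[OF inj(2), of "\<phi> ` \<sigma>"] by (simp add: F_def[abs_def])
    then show "\<exists>\<tau>\<in>(`) \<phi> ` K. F ` geom_simplex \<sigma> \<subseteq> geom_simplex \<tau>"
      using \<open>\<sigma> \<in> K\<close> by blast
  qed
  moreover have "continuous_map (realization ((`) \<phi> ` K)) (realization K) G"
  proof (rule continuous_map_realization)
    show "continuous_map (powertop_real UNIV) (powertop_real UNIV) G"
      unfolding G_def[abs_def] by (rule continuous_map_powertop_reindex)
    show "\<exists>\<sigma>\<in>K. G ` geom_simplex \<tau> \<subseteq> geom_simplex \<sigma>" if "\<tau> \<in> (`) \<phi> ` K" for \<tau>
      using that geom_simplex_reindex[OF inj(1) sV] by (auto simp: G_def[abs_def])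
  qed
  moreover have "G (F f) = f" if "f \<in> topspace (realization K)" for f
    using that \<psi>\<phi> sV by (fastforce simp: topspace_realization geom_simplex_def F_def G_def)
  moreover have "F (G g) = g" if "g \<in> topspace (realization ((`) \<phi> ` K))" for g
    using that sV by (fastforce simp: topspace_realization geom_simplex_def F_def G_def \<psi>_def
        f_inv_into_f inv_into_into)
  ultimately show ?thesis
    unfolding homeomorphic_space_def homeomorphic_maps_def by blast
qed

section \<open>Joins and coset complexes\<close>

lemma sum_vimage_decomp: "\<tau> = Inl ` (Inl -` \<tau>) \<union> Inr ` (Inr -` \<tau>)"
proof (intro equalityI subsetI)
  fix x assume "x \<in> \<tau>"
  then show "x \<in> Inl ` (Inl -` \<tau>) \<union> Inr ` (Inr -` \<tau>)"
    by (cases x) auto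
qed auto

lemma mem_simplicial_join:
  "\<tau> \<in> simplicial_join K L \<longleftrightarrow> \<tau> \<noteq> {} \<and> Inl -` \<tau> \<in> insert {} K \<and> Inr -` \<tau> \<in> insert {} L"
proof
  assume "\<tau> \<in> simplicial_join K L"
  then obtain \<sigma> \<rho> where "\<tau> = Inl ` \<sigma> \<union> Inr ` \<rho>" "\<sigma> \<in> insert {} K" "\<rho> \<in> insert {} L" "\<tau> \<noteq> {}"
    unfolding simplicial_join_def by blast
  moreover have "Inl -` (Inl ` \<sigma> \<union> Inr ` \<rho>) = \<sigma>" "Inr -` (Inl ` \<sigma> \<union> Inr ` \<rho>) = \<rho>"
    by auto
  ultimately show "\<tau> \<noteq> {} \<and> Inl -` \<tau> \<in> insert {} K \<and> Inr -` \<tau> \<in> insert {} L"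
    by simp
next
  assume "\<tau> \<noteq> {} \<and> Inl -` \<tau> \<in> insert {} K \<and> Inr -` \<tau> \<in> insert {} L"
  then show "\<tau> \<in> simplicial_join K L"
    unfolding simplicial_join_def using sum_vimage_decomp[of \<tau>] by blast
qed

lemma image_simplices_eq:
  assumes inj: "inj_on \<phi> V" and surj: "\<phi> ` V = W"
    and simplex_iff: "\<And>\<sigma>. finite \<sigma> \<Longrightarrow> \<sigma> \<subseteq> V \<Longrightarrow> P \<sigma> \<longleftrightarrow> Q (\<phi> ` \<sigma>)"
  shows "(`) \<phi> ` {\<sigma>. finite \<sigma> \<and> \<sigma> \<noteq> {} \<and> \<sigma> \<subseteq> V \<and> P \<sigma>} = {\<tau>. finite \<tau> \<and> \<tau> \<noteq> {} \<and> \<tau> \<subseteq> W \<and> Q \<tau>}"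
proof (intro equalityI subsetI)
  fix \<tau> assume "\<tau> \<in> (`) \<phi> ` {\<sigma>. finite \<sigma> \<and> \<sigma> \<noteq> {} \<and> \<sigma> \<subseteq> V \<and> P \<sigma>}"
  then show "\<tau> \<in> {\<tau>. finite \<tau> \<and> \<tau> \<noteq> {} \<and> \<tau> \<subseteq> W \<and> Q \<tau>}"
    using simplex_iff surj by auto
next
  fix \<tau> assume \<tau>: "\<tau> \<in> {\<tau>. finite \<tau> \<and> \<tau> \<noteq> {} \<and> \<tau> \<subseteq> W \<and> Q \<tau>}"
  define \<sigma> where "\<sigma> = V \<inter> \<phi> -` \<tau>"
  have "\<phi> ` \<sigma> = \<tau>"
    using \<tau> surj by (auto simp: \<sigma>_def)
  moreover have "inj_on \<phi> \<sigma>"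
    using inj by (rule inj_on_subset) (simp add: \<sigma>_def)
  then have "finite \<sigma>"
    using finite_image_iff[of \<phi> \<sigma>] \<tau> \<open>\<phi> ` \<sigma> = \<tau>\<close> by simp
  ultimately show "\<tau> \<in> (`) \<phi> ` {\<sigma>. finite \<sigma> \<and> \<sigma> \<noteq> {} \<and> \<sigma> \<subseteq> V \<and> P \<sigma>}"
    using \<tau> simplex_iff[of \<sigma>] by (intro image_eqI[where x = \<sigma>]) (auto simp: \<sigma>_def)
qed

definition coset_vertices :: "('a, 'b) monoid_scheme \<Rightarrow> 'a set set \<Rightarrow> ('a set \<times> 'a set) set" where
  "coset_vertices G \<H> = {(K, g <#\<^bsub>G\<^esub> K) | g K. g \<in> carrier G \<and> K \<in> \<H>}"

lemma coset_complex_eq: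
  "coset_complex G \<H> = {\<sigma>. finite \<sigma> \<and> \<sigma> \<noteq> {} \<and> \<sigma> \<subseteq> coset_vertices G \<H> \<and> \<Inter>(snd ` \<sigma>) \<noteq> {}}"
  by (simp add: coset_complex_def coset_vertices_def)

lemma insert_empty_coset_complex:
  "insert {} (coset_complex G \<H>) = {\<sigma>. finite \<sigma> \<and> \<sigma> \<subseteq> coset_vertices G \<H> \<and> \<Inter>(snd ` \<sigma>) \<noteq> {}}"
  by (auto simp: coset_complex_eq)

lemma simplicial_join_coset_complex:
  fixes G :: "('a, 'b) monoid_scheme" and G' :: "('c, 'd) monoid_scheme"
  shows "simplicial_join (coset_complex G \<H>) (coset_complex G' \<H>') =
     {\<tau>. finite \<tau> \<and> \<tau> \<noteq> {} \<and> \<tau> \<subseteq> Inl ` coset_vertices G \<H> \<union> Inr ` coset_vertices G' \<H>' \<and>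
         \<Inter>(snd ` Inl -` \<tau>) \<noteq> {} \<and> \<Inter>(snd ` Inr -` \<tau>) \<noteq> {}}"
proof (rule Set.set_eqI)
  fix \<tau> :: "('a set \<times> 'a set + 'c set \<times> 'c set) set"
  have fin: "finite \<tau> \<longleftrightarrow> finite (Inl -` \<tau>) \<and> finite (Inr -` \<tau>)"
    using sum_vimage_decomp[of \<tau>] by (metis finite_Un finite_imageI finite_vimageI inj_Inl inj_Inr)
  have sub: "\<tau> \<subseteq> Inl ` A \<union> Inr ` B \<longleftrightarrow> Inl -` \<tau> \<subseteq> A \<and> Inr -` \<tau> \<subseteq> B" for A B
  proof
    assume "Inl -` \<tau> \<subseteq> A \<and> Inr -` \<tau> \<subseteq> B"
    then show "\<tau> \<subseteq> Inl ` A \<union> Inr ` B"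
      using sum_vimage_decomp[of \<tau>] by (metis Un_mono image_mono)
  qed auto
  show "\<tau> \<in> simplicial_join (coset_complex G \<H>) (coset_complex G' \<H>') \<longleftrightarrow>
      \<tau> \<in> {\<tau>. finite \<tau> \<and> \<tau> \<noteq> {} \<and> \<tau> \<subseteq> Inl ` coset_vertices G \<H> \<union> Inr ` coset_vertices G' \<H>' \<and>
         \<Inter>(snd ` Inl -` \<tau>) \<noteq> {} \<and> \<Inter>(snd ` Inr -` \<tau>) \<noteq> {}}"
    unfolding mem_simplicial_join insert_empty_coset_complex mem_Collect_eq fin sub by auto
qed

lemma Inter_Int_nonempty_iff:
  assumes "A \<noteq> {}"
  shows "\<Inter>((\<lambda>C. C \<inter> A) ` \<C>) \<noteq> {} \<longleftrightarrow> (\<exists>a\<in>A. \<forall>C\<in>\<C>. a \<in> C)"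
  using assms by (cases "\<C> = {}") auto

section \<open>Cosets modulo a normal subgroup\<close>

no_notation (ASCII) subset_mset  (infix \<open><#\<close> 50)

lemma (in group) l_coset_subgroup_Int:
  assumes "subgroup H G" "subgroup K G" "n \<in> H"
  shows "n <#\<^bsub>G\<lparr>carrier := H\<rparr>\<^esub> (K \<inter> H) = (n <# K) \<inter> H"
proof (intro equalityI subsetI)
  fix x assume "x \<in> n <#\<^bsub>G\<lparr>carrier := H\<rparr>\<^esub> (K \<inter> H)"
  then show "x \<in> (n <# K) \<inter> H"
    using assms by (auto simp: l_coset_def subgroup.m_closed)
next
  fix x assume x: "x \<in> (n <# K) \<inter> H"
  then obtain k where k: "k \<in> K" "x = n \<otimes> k"
    by (auto simp: l_coset_def)
  have "k = inv n \<otimes> x"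
    using k assms by (simp add: m_assoc[symmetric] subgroup.mem_carrier)
  then have "k \<in> H"
    using x assms by (simp add: subgroup.m_closed subgroup.m_inv_closed)
  then show "x \<in> n <#\<^bsub>G\<lparr>carrier := H\<rparr>\<^esub> (K \<inter> H)"
    using k by (auto simp: l_coset_def)
qed

lemma (in normal) Union_rcos_image_l_coset:
  assumes "subgroup K G" "H \<subseteq> K" "g \<in> carrier G"
  shows "\<Union>((\<lambda>x. H #> x) ` (g <# K)) = g <# K"
proof (intro equalityI subsetI)
  fix z assume "z \<in> \<Union>((\<lambda>x. H #> x) ` (g <# K))"
  then obtain x n where x: "x \<in> g <# K" and n: "n \<in> H" "z = n \<otimes> x"
    by (auto simp: r_coset_def)
  have xc: "x \<in> carrier G"
    using x assms l_coset_carrier by blast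
  have "z = x \<otimes> (inv x \<otimes> n \<otimes> x)"
    using n xc by (simp add: m_assoc[symmetric] r_inv)
  moreover have "inv x \<otimes> n \<otimes> x \<in> K"
    using inv_op_closed1[OF xc n(1)] assms(2) by blast
  ultimately have "z \<in> x <# K"
    by (auto simp: l_coset_def)
  then show "z \<in> g <# K"
    using l_repr_independence[OF x assms(3,1)] by simp
next
  fix x assume "x \<in> g <# K"
  then show "x \<in> \<Union>((\<lambda>x. H #> x) ` (g <# K))"
    using assms l_coset_carrier rcos_self[OF _ subgroup_axioms] by blast
qed

lemma (in normal) Union_quot_image:
  assumes "subgroup K G" "H \<subseteq> K"
  shows "\<Union>(quot_image G H K) = K"
  using Union_rcos_image_l_coset[OF assms one_closed] assms
  by (simp add: quot_image_def lcos_mult_one subgroup.subset)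

lemma (in normal) l_coset_quot_image:
  assumes "subgroup K G" "g \<in> carrier G"
  shows "(H #> g) <#\<^bsub>G Mod H\<^esub> quot_image G H K = (\<lambda>x. H #> x) ` (g <# K)"
proof -
  have "(H #> g) <#\<^bsub>G Mod H\<^esub> quot_image G H K = (\<Union>k\<in>K. {(H #> g) <#> (H #> k)})"
    unfolding l_coset_def quot_image_def FactGroup_def by simp
  also have "\<dots> = (\<Union>k\<in>K. {H #> (g \<otimes> k)})"
    using assms by (intro SUP_cong) (auto simp: rcos_sum subgroup.mem_carrier)
  finally show ?thesis
    by (auto simp: l_coset_def)
qed

section \<open>The vertex map onto the join\<close>

lemma upper_fam_eq: "upper_fam G \<H> N = \<H> - lower_fam G \<H> N"
  by (auto simp: lower_fam_def upper_fam_def)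

definition join_vertex ::
    "('a, 'b) monoid_scheme \<Rightarrow> 'a set set \<Rightarrow> 'a set \<Rightarrow> 'a set \<times> 'a set \<Rightarrow> ('a set set \<times> 'a set set) + ('a set \<times> 'a set)"
  where "join_vertex G \<H> N v =
    (if fst v \<in> lower_fam G \<H> N then Inl (quot_image G N (fst v), (\<lambda>x. N #>\<^bsub>G\<^esub> x) ` snd v)
     else Inr (fst v \<inter> N, snd v \<inter> N))"

lemma snd_vimage_Inl_join_vertex:
  "snd ` Inl -` join_vertex G \<H> N ` \<sigma> =
     (\<lambda>C. (\<lambda>x. N #>\<^bsub>G\<^esub> x) ` C) ` snd ` {v \<in> \<sigma>. fst v \<in> lower_fam G \<H> N}"
proof -
  have "Inl -` join_vertex G \<H> N ` \<sigma> =
      (\<lambda>v. (quot_image G N (fst v), (\<lambda>x. N #>\<^bsub>G\<^esub> x) ` snd v)) ` {v \<in> \<sigma>. fst v \<in> lower_fam G \<H> N}"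
    by (auto simp: join_vertex_def image_iff split: if_splits)
  then show ?thesis
    by (simp add: image_image)
qed

lemma snd_vimage_Inr_join_vertex:
  "snd ` Inr -` join_vertex G \<H> N ` \<sigma> = (\<lambda>C. C \<inter> N) ` snd ` {v \<in> \<sigma>. fst v \<notin> lower_fam G \<H> N}"
proof -
  have "Inr -` join_vertex G \<H> N ` \<sigma> = (\<lambda>v. (fst v \<inter> N, snd v \<inter> N)) ` {v \<in> \<sigma>. fst v \<notin> lower_fam G \<H> N}"
    by (auto simp: join_vertex_def image_iff split: if_splits)
  then show ?thesis
    by (simp add: image_image)
qed

locale divided_family = normal N G for N :: "'a set" and G :: "('a, 'b) monoid_scheme" (structure) +
  fixes \<H> :: "'a set set"
  assumes subgroup_family: "K \<in> \<H> \<Longrightarrow> subgroup K G"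
    and strongly_divided: "strongly_divided G \<H> N"
begin

lemma subset_lower_fam: "H \<in> lower_fam G \<H> N \<Longrightarrow> N \<subseteq> H"
  using strongly_divided by (simp add: strongly_divided_def)

lemma upper_fam_Inter_meets:
  assumes "finite F" "F \<noteq> {}" "F \<subseteq> upper_fam G \<H> N" "x \<in> carrier G"
  shows "\<exists>k\<in>\<Inter>F. x \<otimes> k \<in> N"
proof -
  have "inv x \<in> \<Inter>F <#> N"
    using strongly_divided assms by (simp add: strongly_divided_def)
  then obtain k n where kn: "k \<in> \<Inter>F" "n \<in> N" "inv x = k \<otimes> n"
    by (auto simp: set_mult_def)
  obtain K where "K \<in> F"
    using assms(2) by blast
  then have kc: "k \<in> carrier G"
    using kn(1) assms(3) subgroup_family subgroup.mem_carrier by (fastforce simp: upper_fam_def)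
  have nc: "n \<in> carrier G"
    using kn(2) by (rule mem_carrier)
  have "x \<otimes> k = x \<otimes> (k \<otimes> n) \<otimes> inv n"
    using kc nc assms(4) by (simp add: m_assoc)
  also have "\<dots> = inv n"
    using assms(4) nc by (simp add: kn(3)[symmetric])
  finally have "x \<otimes> k = inv n" .
  then show ?thesis
    using kn(1) m_inv_closed[OF kn(2)] by metis
qed

lemma inj_on_Int_upper_fam: "inj_on (\<lambda>K. K \<inter> N) (upper_fam G \<H> N)"
proof -
  have "A \<subseteq> B" if AB: "A \<in> upper_fam G \<H> N" "B \<in> upper_fam G \<H> N" "A \<inter> N = B \<inter> N" for A B
  proof
    fix a assume a: "a \<in> A"
    have A: "subgroup A G" and B: "subgroup B G"
      using AB subgroup_family by (auto simp: upper_fam_def)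
    have ac: "a \<in> carrier G"
      using subgroup.mem_carrier[OF A a] .
    obtain k where k: "k \<in> A" "k \<in> B" "inv a \<otimes> k \<in> N"
      using upper_fam_Inter_meets[of "{A, B}" "inv a"] AB(1,2) inv_closed[OF ac] by blast
    have "inv a \<otimes> k \<in> A"
      by (intro subgroup.m_closed[OF A] subgroup.m_inv_closed[OF A] a k(1))
    with k(3) AB(3) have "inv a \<otimes> k \<in> B"
      by blast
    moreover have "a = k \<otimes> inv (inv a \<otimes> k)"
      using ac subgroup.mem_carrier[OF A k(1)] by (simp add: inv_mult_group m_assoc[symmetric])
    ultimately show "a \<in> B"
      using B k(2) by (metis subgroup.m_closed subgroup.m_inv_closed)
  qed
  then show ?thesis
    by (intro inj_onI) blast
qed

lemma coset_vertex_carrier: "v \<in> coset_vertices G \<H> \<Longrightarrow> snd v \<subseteq> carrier G"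
  by (auto simp: coset_vertices_def intro: l_coset_carrier subgroup_family)

lemma coset_vertex_repr:
  assumes "v \<in> coset_vertices G \<H>" "x \<in> snd v"
  shows "snd v = x <# fst v"
  using assms l_repr_independence subgroup_family by (auto simp: coset_vertices_def)

lemma coset_vertex_mult_closed:
  assumes "v \<in> coset_vertices G \<H>" "x \<in> snd v" "h \<in> fst v"
  shows "x \<otimes> h \<in> snd v"
  using coset_vertex_repr[OF assms(1,2)] assms(3) by (auto simp: l_coset_def)

lemma upper_coset_meets:
  assumes "v \<in> coset_vertices G \<H>" "fst v \<notin> lower_fam G \<H> N"
  shows "\<exists>n\<in>N. n \<in> snd v"
proof -
  obtain g K where v: "v = (K, g <# K)" "g \<in> carrier G" "K \<in> upper_fam G \<H> N"
    using assms by (auto simp: coset_vertices_def upper_fam_eq)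
  then obtain k where "k \<in> K" "g \<otimes> k \<in> N"
    using upper_fam_Inter_meets[of "{K}" g] by auto
  then show ?thesis
    using v by (auto simp: l_coset_def)
qed

lemma Inter_rcos_images_nonempty_iff:
  assumes "S \<subseteq> coset_vertices G \<H>" "fst ` S \<subseteq> lower_fam G \<H> N"
  shows "\<Inter>((\<lambda>C. (\<lambda>x. N #> x) ` C) ` snd ` S) \<noteq> {} \<longleftrightarrow> (\<exists>y\<in>carrier G. \<forall>v\<in>S. y \<in> snd v)"
proof
  assume "\<Inter>((\<lambda>C. (\<lambda>x. N #> x) ` C) ` snd ` S) \<noteq> {}"
  then obtain c where "c \<in> \<Inter>((\<lambda>C. (\<lambda>x. N #> x) ` C) ` snd ` S)"
    by blast
  then have c: "\<forall>v\<in>S. c \<in> (\<lambda>x. N #> x) ` snd v"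
    by auto
  show "\<exists>y\<in>carrier G. \<forall>v\<in>S. y \<in> snd v"
  proof (cases "S = {}")
    case False
    then obtain v0 where "v0 \<in> S"
      by blast
    with c obtain y where y: "y \<in> snd v0" "c = N #> y"
      by blast
    have yc: "y \<in> carrier G"
      using coset_vertex_carrier y(1) assms(1) \<open>v0 \<in> S\<close> by blast
    have "y \<in> snd v" if vS: "v \<in> S" for v
    proof -
      obtain g K where v: "v = (K, g <# K)" "g \<in> carrier G"
        using vS assms(1) unfolding coset_vertices_def by blast
      have K: "K \<in> lower_fam G \<H> N"
        using assms(2) vS v(1) by (metis fst_conv image_subset_iff)
      have "N #> y \<in> (\<lambda>x. N #> x) ` (g <# K)"
        using c vS y(2) v(1) by auto
      then show ?thesis
        using rcos_self[OF yc subgroup_axioms] v K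
          Union_rcos_image_l_coset[OF subgroup_family subset_lower_fam, of K g]
        by (auto simp: lower_fam_def)
    qed
    then show ?thesis
      using yc by blast
  qed blast
next
  assume "\<exists>y\<in>carrier G. \<forall>v\<in>S. y \<in> snd v"
  then obtain y where "\<forall>v\<in>S. y \<in> snd v"
    by blast
  then have "N #> y \<in> \<Inter>((\<lambda>C. (\<lambda>x. N #> x) ` C) ` snd ` S)"
    by auto
  then show "\<Inter>((\<lambda>C. (\<lambda>x. N #> x) ` C) ` snd ` S) \<noteq> {}"
    by blast
qed

lemma Inter_coset_vertices_nonempty_iff:
  assumes "finite \<sigma>" "\<sigma> \<subseteq> coset_vertices G \<H>"
  shows "\<Inter>(snd ` \<sigma>) \<noteq> {} \<longleftrightarrow>
    (\<exists>y\<in>carrier G. \<forall>v\<in>\<sigma>. fst v \<in> lower_fam G \<H> N \<longrightarrow> y \<in> snd v) \<and>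
    (\<exists>m\<in>N. \<forall>v\<in>\<sigma>. fst v \<notin> lower_fam G \<H> N \<longrightarrow> m \<in> snd v)"
proof -
  define F where "F = fst ` {v \<in> \<sigma>. fst v \<notin> lower_fam G \<H> N}"
  have "finite F" "F \<subseteq> upper_fam G \<H> N"
    using assms by (auto simp: F_def coset_vertices_def upper_fam_eq)
  then have meet: "\<exists>k\<in>\<Inter>F. x \<otimes> k \<in> N" if "F \<noteq> {}" "x \<in> carrier G" for x
    using upper_fam_Inter_meets that by blast
  have upper_closed: "x \<otimes> k \<in> snd v"
    if v: "v \<in> \<sigma>" "fst v \<notin> lower_fam G \<H> N" "x \<in> snd v" "k \<in> \<Inter>F" for v x k
  proof -
    have "fst v \<in> F"
      unfolding F_def using v(1,2) by blast
    then show ?thesis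
      using v assms(2) coset_vertex_mult_closed by blast
  qed
  have all_lower: "fst v \<in> lower_fam G \<H> N" if "F = {}" "v \<in> \<sigma>" for v
    using that unfolding F_def image_is_empty by blast
  show ?thesis
  proof
    assume "\<Inter>(snd ` \<sigma>) \<noteq> {}"
    then obtain x where "x \<in> \<Inter>(snd ` \<sigma>)"
      by blast
    then have x: "\<forall>v\<in>\<sigma>. x \<in> snd v"
      by auto
    show "(\<exists>y\<in>carrier G. \<forall>v\<in>\<sigma>. fst v \<in> lower_fam G \<H> N \<longrightarrow> y \<in> snd v) \<and>
        (\<exists>m\<in>N. \<forall>v\<in>\<sigma>. fst v \<notin> lower_fam G \<H> N \<longrightarrow> m \<in> snd v)"
    proof (cases "\<sigma> = {}")
      case False
      then have xc: "x \<in> carrier G"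
        using x assms(2) coset_vertex_carrier by blast
      have "\<exists>m\<in>N. \<forall>v\<in>\<sigma>. fst v \<notin> lower_fam G \<H> N \<longrightarrow> m \<in> snd v"
      proof (cases "F = {}")
        case False
        then obtain k where "k \<in> \<Inter>F" "x \<otimes> k \<in> N"
          using meet xc by blast
        then show ?thesis
          using x upper_closed by blast
      qed (use all_lower subgroup.one_closed[OF subgroup_axioms] in blast)
      then show ?thesis
        using x xc by blast
    qed (use subgroup.one_closed[OF subgroup_axioms] in blast)
  next
    assume "(\<exists>y\<in>carrier G. \<forall>v\<in>\<sigma>. fst v \<in> lower_fam G \<H> N \<longrightarrow> y \<in> snd v) \<and>
        (\<exists>m\<in>N. \<forall>v\<in>\<sigma>. fst v \<notin> lower_fam G \<H> N \<longrightarrow> m \<in> snd v)"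
    then obtain y m where y: "y \<in> carrier G" "\<forall>v\<in>\<sigma>. fst v \<in> lower_fam G \<H> N \<longrightarrow> y \<in> snd v"
      and m: "m \<in> N" "\<forall>v\<in>\<sigma>. fst v \<notin> lower_fam G \<H> N \<longrightarrow> m \<in> snd v"
      by blast
    show "\<Inter>(snd ` \<sigma>) \<noteq> {}"
    proof (cases "F = {}")
      case True
      then show ?thesis
        using y all_lower by blast
    next
      case False
      have mc: "m \<in> carrier G"
        using m(1) by (rule mem_carrier)
      obtain k where k: "k \<in> \<Inter>F" "inv y \<otimes> m \<otimes> k \<in> N"
        using meet[OF False m_closed[OF inv_closed[OF y(1)] mc]] by blast
      obtain K where "K \<in> F"
        using False by blast
      then have "subgroup K G" "k \<in> K"
        using k(1) \<open>F \<subseteq> upper_fam G \<H> N\<close> subgroup_family by (auto simp: upper_fam_def)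
      then have kc: "k \<in> carrier G"
        by (rule subgroup.mem_carrier)
      have "m \<otimes> k \<in> snd v" if "v \<in> \<sigma>" for v
      proof (cases "fst v \<in> lower_fam G \<H> N")
        case True
        then have "y \<otimes> (inv y \<otimes> m \<otimes> k) \<in> snd v"
          using that y(2) k(2) subset_lower_fam assms(2) coset_vertex_mult_closed by blast
        then show ?thesis
          using y(1) mc kc by (simp add: m_assoc[symmetric])
      qed (use that m(2) k(1) upper_closed in blast)
      then show ?thesis
        by blast
    qed
  qed
qed

lemma Inter_join_vertex_nonempty_iff:
  assumes "finite \<sigma>" "\<sigma> \<subseteq> coset_vertices G \<H>"
  shows "\<Inter>(snd ` \<sigma>) \<noteq> {} \<longleftrightarrow>
    \<Inter>(snd ` Inl -` join_vertex G \<H> N ` \<sigma>) \<noteq> {} \<and> \<Inter>(snd ` Inr -` join_vertex G \<H> N ` \<sigma>) \<noteq> {}"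
proof -
  have "\<Inter>(snd ` Inl -` join_vertex G \<H> N ` \<sigma>) \<noteq> {} \<longleftrightarrow>
      (\<exists>y\<in>carrier G. \<forall>v\<in>{v \<in> \<sigma>. fst v \<in> lower_fam G \<H> N}. y \<in> snd v)"
    unfolding snd_vimage_Inl_join_vertex using assms(2)
    by (intro Inter_rcos_images_nonempty_iff) auto
  also have "\<dots> \<longleftrightarrow> (\<exists>y\<in>carrier G. \<forall>v\<in>\<sigma>. fst v \<in> lower_fam G \<H> N \<longrightarrow> y \<in> snd v)"
    by blast
  finally have "\<Inter>(snd ` Inl -` join_vertex G \<H> N ` \<sigma>) \<noteq> {} \<longleftrightarrow>
      (\<exists>y\<in>carrier G. \<forall>v\<in>\<sigma>. fst v \<in> lower_fam G \<H> N \<longrightarrow> y \<in> snd v)" .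
  moreover have "\<Inter>(snd ` Inr -` join_vertex G \<H> N ` \<sigma>) \<noteq> {} \<longleftrightarrow>
      (\<exists>m\<in>N. \<forall>C\<in>snd ` {v \<in> \<sigma>. fst v \<notin> lower_fam G \<H> N}. m \<in> C)"
    unfolding snd_vimage_Inr_join_vertex using subgroup.one_closed[OF subgroup_axioms]
    by (intro Inter_Int_nonempty_iff) blast
  moreover have "\<dots> \<longleftrightarrow> (\<exists>m\<in>N. \<forall>v\<in>\<sigma>. fst v \<notin> lower_fam G \<H> N \<longrightarrow> m \<in> snd v)"
    by blast
  ultimately show ?thesis
    using Inter_coset_vertices_nonempty_iff[OF assms] by simp
qed

lemma inj_on_join_vertex: "inj_on (join_vertex G \<H> N) (coset_vertices G \<H>)"
proof (rule inj_onI)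
  fix v w
  assume v: "v \<in> coset_vertices G \<H>" and w: "w \<in> coset_vertices G \<H>"
    and eq: "join_vertex G \<H> N v = join_vertex G \<H> N w"
  obtain g K where gK: "v = (K, g <# K)" "g \<in> carrier G" "K \<in> \<H>"
    using v by (auto simp: coset_vertices_def)
  obtain g' K' where g'K': "w = (K', g' <# K')" "g' \<in> carrier G" "K' \<in> \<H>"
    using w by (auto simp: coset_vertices_def)
  show "v = w"
  proof (cases "K \<in> lower_fam G \<H> N")
    case True
    with eq have K': "K' \<in> lower_fam G \<H> N" and "quot_image G N K = quot_image G N K'"
      and "(\<lambda>x. N #> x) ` (g <# K) = (\<lambda>x. N #> x) ` (g' <# K')"
      by (auto simp: join_vertex_def gK g'K' split: if_splits)
    then have "K = K'" "g <# K = g' <# K'"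
      using True gK g'K' Union_quot_image Union_rcos_image_l_coset subgroup_family subset_lower_fam
      by metis+
    then show ?thesis
      using gK g'K' by simp
  next
    case False
    with eq have K': "K' \<notin> lower_fam G \<H> N" and "K \<inter> N = K' \<inter> N"
      and C: "(g <# K) \<inter> N = (g' <# K') \<inter> N"
      by (auto simp: join_vertex_def gK g'K' split: if_splits)
    then have "K = K'"
      using False gK g'K' inj_on_Int_upper_fam by (auto simp: upper_fam_eq dest: inj_onD)
    obtain n where "n \<in> N" "n \<in> g <# K"
      using upper_coset_meets[OF v] False gK by auto
    moreover from this C have "n \<in> g' <# K'"
      by blast
    ultimately have "g <# K = n <# K" "g' <# K' = n <# K'"
      using coset_vertex_repr[OF v] coset_vertex_repr[OF w] gK g'K' by auto
    then show ?thesis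
      using gK g'K' \<open>K = K'\<close> by simp
  qed
qed

lemma join_vertex_image:
  "join_vertex G \<H> N ` coset_vertices G \<H> =
     Inl ` coset_vertices (G Mod N) (quot_fam G \<H> N) \<union> Inr ` coset_vertices (G\<lparr>carrier := N\<rparr>) (inter_fam G \<H> N)"
proof (intro equalityI subsetI)
  fix z assume "z \<in> join_vertex G \<H> N ` coset_vertices G \<H>"
  then obtain g K where z: "z = join_vertex G \<H> N (K, g <# K)" "g \<in> carrier G" "K \<in> \<H>"
    by (auto simp: coset_vertices_def)
  show "z \<in> Inl ` coset_vertices (G Mod N) (quot_fam G \<H> N) \<union> Inr ` coset_vertices (G\<lparr>carrier := N\<rparr>) (inter_fam G \<H> N)"
  proof (cases "K \<in> lower_fam G \<H> N")
    case True
    then have "z = Inl (quot_image G N K, (N #> g) <#\<^bsub>G Mod N\<^esub> quot_image G N K)"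
      using z l_coset_quot_image subgroup_family by (simp add: join_vertex_def)
    moreover have "N #> g \<in> carrier (G Mod N)"
      using z(2) by (simp add: carrier_FactGroup)
    moreover have "quot_image G N K \<in> quot_fam G \<H> N"
      using True by (simp add: quot_fam_def)
    ultimately show ?thesis
      by (auto simp: coset_vertices_def)
  next
    case False
    obtain n where n: "n \<in> N" "n \<in> g <# K"
      using upper_coset_meets[of "(K, g <# K)"] False z by (auto simp: coset_vertices_def)
    then have "g <# K = n <# K"
      using l_repr_independence z subgroup_family by blast
    then have "z = Inr (K \<inter> N, n <#\<^bsub>G\<lparr>carrier := N\<rparr>\<^esub> (K \<inter> N))"
      using z False l_coset_subgroup_Int[OF subgroup_axioms subgroup_family[OF z(3)] n(1)]
      by (simp add: join_vertex_def)
    moreover have "K \<inter> N \<in> inter_fam G \<H> N"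
      using False z(3) by (auto simp: inter_fam_def upper_fam_eq)
    ultimately show ?thesis
      using n(1) by (auto simp: coset_vertices_def)
  qed
next
  fix z
  assume "z \<in> Inl ` coset_vertices (G Mod N) (quot_fam G \<H> N) \<union> Inr ` coset_vertices (G\<lparr>carrier := N\<rparr>) (inter_fam G \<H> N)"
  then consider (lower) c Q where "z = Inl (Q, c <#\<^bsub>G Mod N\<^esub> Q)" "c \<in> carrier (G Mod N)" "Q \<in> quot_fam G \<H> N"
    | (upper) n K' where "z = Inr (K', n <#\<^bsub>G\<lparr>carrier := N\<rparr>\<^esub> K')" "n \<in> N" "K' \<in> inter_fam G \<H> N"
    by (auto simp: coset_vertices_def)
  then show "z \<in> join_vertex G \<H> N ` coset_vertices G \<H>"
  proof cases
    case lower
    then obtain g H where gH: "c = N #> g" "g \<in> carrier G" "H \<in> lower_fam G \<H> N" "Q = quot_image G N H"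
      by (auto simp: carrier_FactGroup quot_fam_def)
    then have "z = join_vertex G \<H> N (H, g <# H)"
      using lower l_coset_quot_image subgroup_family by (simp add: join_vertex_def lower_fam_def)
    then show ?thesis
      using gH by (auto simp: coset_vertices_def lower_fam_def)
  next
    case upper
    then obtain K where K: "K \<in> upper_fam G \<H> N" "K' = K \<inter> N"
      by (auto simp: inter_fam_def)
    then have "z = join_vertex G \<H> N (K, n <# K)"
      using upper l_coset_subgroup_Int[OF subgroup_axioms subgroup_family]
      by (auto simp: join_vertex_def upper_fam_eq)
    moreover have "(K, n <# K) \<in> coset_vertices G \<H>"
      using K(1) mem_carrier[OF upper(2)] unfolding coset_vertices_def upper_fam_def by blast
    ultimately show ?thesis
      by blast
  qed
qed

end

theorem theorem3p19:
  fixes G :: "('a, 'b) monoid_scheme" and N :: "'a set" and \<H> :: "'a set set"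
  assumes "group G"
    and "N \<lhd> G"
    and "\<forall>H \<in> \<H>. subgroup H G \<and> H \<noteq> carrier G"
    and "strongly_divided G \<H> N"
  shows "realization (coset_complex G \<H>) homotopy_equivalent_space
           realization (simplicial_join (coset_complex (G Mod N) (quot_fam G \<H> N))
                                         (coset_complex (G\<lparr>carrier := N\<rparr>) (inter_fam G \<H> N)))"
proof -
  interpret divided_family N G \<H>
    using assms(2-4) by (simp add: divided_family_def divided_family_axioms_def)
  have "(`) (join_vertex G \<H> N) ` coset_complex G \<H> =
      simplicial_join (coset_complex (G Mod N) (quot_fam G \<H> N)) (coset_complex (G\<lparr>carrier := N\<rparr>) (inter_fam G \<H> N))"
    unfolding simplicial_join_coset_complex unfolding coset_complex_eq
    using inj_on_join_vertex join_vertex_image Inter_join_vertex_nonempty_iff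
    by (rule image_simplices_eq)
  moreover have "inj_on (join_vertex G \<H> N) (\<Union>(coset_complex G \<H>))"
    using inj_on_join_vertex by (rule inj_on_subset) (auto simp: coset_complex_eq)
  ultimately show ?thesis
    using homeomorphic_space_realization_image homeomorphic_imp_homotopy_equivalent_space by metis
qed

end
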